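(* Suppose $(A,V,B)$ satisfies Schur-Weyl duality and $e\in B$ is an idempotent with $Ve\neq0$. Then the following are equivalent: (1) the triple $(A,Ve,eBe)$ satisfies Schur-Weyl duality; (2) every $eBe$-linear endomorphism of $Ve$ extends to a $B$-linear endomorphism of $V$ (i.e. the restriction map $\Theta_e:\operatorname{End}_B(V)\to\operatorname{End}_{eBe}(Ve)$, $\varphi\mapsto\varphi|_{Ve}$, is surjective).
   Context: $k$ is a field, $A,B$ are $k$-algebras, $V$ an $(A,B)$-bimodule. $(A,V,B)$ satisfies Schur-Weyl duality if the image of $A$ in $\operatorname{End}_k(V)$ (via $a\mapsto(v\mapsto av)$) equals $\operatorname{End}_B(V)$ and the image of $B$ (via $b\mapsto(v\mapsto vb)$) equals $\operatorname{End}_A(V)$. $Ve$ is an $(A,eBe)$-bimodule; any $B$-linear $\varphi$ satisfies $\varphi(Ve)\subseteq Ve$. *)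

theory Defs
  imports Main "HOL.Vector_Spaces" "HOL-Library.FuncSet"
begin

definition k_algebra :: "('k::field \<Rightarrow> 'a::ring_1 \<Rightarrow> 'a) \<Rightarrow> bool" where
  "k_algebra sA \<longleftrightarrow> vector_space sA \<and>
     (\<forall>c x y. sA c (x * y) = sA c x * y \<and> sA c (x * y) = x * sA c y)"

definition kbimodule ::
  "('k::field \<Rightarrow> 'a::ring_1 \<Rightarrow> 'a) \<Rightarrow> ('k \<Rightarrow> 'b::ring_1 \<Rightarrow> 'b) \<Rightarrow>
   ('k \<Rightarrow> 'v::ab_group_add \<Rightarrow> 'v) \<Rightarrow> ('a \<Rightarrow> 'v \<Rightarrow> 'v) \<Rightarrow> ('v \<Rightarrow> 'b \<Rightarrow> 'v) \<Rightarrow> bool" where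
  "kbimodule sA sB sV actA actB \<longleftrightarrow>
     k_algebra sA \<and> k_algebra sB \<and> vector_space sV \<and>
     (\<forall>a a' v. actA (a * a') v = actA a (actA a' v)) \<and>
     (\<forall>v. actA 1 v = v) \<and>
     (\<forall>a a' v. actA (a + a') v = actA a v + actA a' v) \<and>
     (\<forall>a v w. actA a (v + w) = actA a v + actA a w) \<and>
     (\<forall>a c v. actA a (sV c v) = sV c (actA a v)) \<and>
     (\<forall>a c v. actA (sA c a) v = sV c (actA a v)) \<and>
     (\<forall>b b' v. actB v (b * b') = actB (actB v b) b') \<and>
     (\<forall>v. actB v 1 = v) \<and>
     (\<forall>b b' v. actB v (b + b') = actB v b + actB v b') \<and>
     (\<forall>b v w. actB (v + w) b = actB v b + actB w b) \<and>
     (\<forall>b c v. actB (sV c v) b = sV c (actB v b)) \<and>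
     (\<forall>b c v. actB v (sB c b) = sV c (actB v b)) \<and>
     (\<forall>a b v. actB (actA a v) b = actA a (actB v b))"

definition lin_endos :: "('k \<Rightarrow> 'v::ab_group_add \<Rightarrow> 'v) \<Rightarrow> 'v set \<Rightarrow> ('v \<Rightarrow> 'v) set" where
  "lin_endos sV W = {f. f \<in> extensional W \<and> f ` W \<subseteq> W \<and>
      (\<forall>x\<in>W. \<forall>y\<in>W. f (x + y) = f x + f y) \<and> (\<forall>c. \<forall>x\<in>W. f (sV c x) = sV c (f x))}"

definition left_endos :: "('k \<Rightarrow> 'v::ab_group_add \<Rightarrow> 'v) \<Rightarrow> 'v set \<Rightarrow> ('a \<Rightarrow> 'v \<Rightarrow> 'v) \<Rightarrow> 'a set \<Rightarrow> ('v \<Rightarrow> 'v) set" where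
  "left_endos sV W actA Aset = {f \<in> lin_endos sV W. \<forall>a\<in>Aset. \<forall>w\<in>W. f (actA a w) = actA a (f w)}"

definition right_endos :: "('k \<Rightarrow> 'v::ab_group_add \<Rightarrow> 'v) \<Rightarrow> 'v set \<Rightarrow> ('v \<Rightarrow> 'b \<Rightarrow> 'v) \<Rightarrow> 'b set \<Rightarrow> ('v \<Rightarrow> 'v) set" where
  "right_endos sV W actB Bset = {f \<in> lin_endos sV W. \<forall>b\<in>Bset. \<forall>w\<in>W. f (actB w b) = actB (f w) b}"

definition left_image :: "'v set \<Rightarrow> ('a \<Rightarrow> 'v \<Rightarrow> 'v) \<Rightarrow> 'a set \<Rightarrow> ('v \<Rightarrow> 'v) set" where
  "left_image W actA Aset = (\<lambda>a. restrict (actA a) W) ` Aset"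

definition right_image :: "'v set \<Rightarrow> ('v \<Rightarrow> 'b \<Rightarrow> 'v) \<Rightarrow> 'b set \<Rightarrow> ('v \<Rightarrow> 'v) set" where
  "right_image W actB Bset = (\<lambda>b. restrict (\<lambda>w. actB w b) W) ` Bset"

definition schur_weyl ::
  "('k \<Rightarrow> 'v::ab_group_add \<Rightarrow> 'v) \<Rightarrow> 'v set \<Rightarrow> ('a \<Rightarrow> 'v \<Rightarrow> 'v) \<Rightarrow> 'a set \<Rightarrow> ('v \<Rightarrow> 'b \<Rightarrow> 'v) \<Rightarrow> 'b set \<Rightarrow> bool" where
  "schur_weyl sV W actA Aset actB Bset \<longleftrightarrow>
     left_image W actA Aset = right_endos sV W actB Bset \<and>
     right_image W actB Bset = left_endos sV W actA Aset"

end

theory Submission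
  imports Defs
begin

text \<open>Restriction to \<open>Ve\<close> always maps the image of \<open>A\<close> into \<open>End\<^bsub>eBe\<^esub>(Ve)\<close>, and the image of
  \<open>eBe\<close> onto \<open>End\<^sub>A(Ve)\<close>: an \<open>A\<close>-linear \<open>f\<close> on \<open>Ve\<close> gives the \<open>A\<close>-linear map \<open>v \<mapsto> f(ve)\<close> on \<open>V\<close>,
  which by duality for \<open>V\<close> is right multiplication by some \<open>b\<close>, so \<open>f\<close> is right multiplication
  by \<open>ebe\<close>. Hence duality for \<open>Ve\<close> reduces to \<open>End\<^bsub>eBe\<^esub>(Ve)\<close> lying in the image of \<open>A\<close>; since
  \<open>End\<^sub>B(V)\<close> is the image of \<open>A\<close>, this says exactly that every \<open>eBe\<close>-linear endomorphism of
  \<open>Ve\<close> is the restriction of a \<open>B\<close>-linear endomorphism of \<open>V\<close>.\<close>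

definition sub_bimodule ::
  "('k \<Rightarrow> 'v::ab_group_add \<Rightarrow> 'v) \<Rightarrow> 'v set \<Rightarrow> ('a \<Rightarrow> 'v \<Rightarrow> 'v) \<Rightarrow> ('v \<Rightarrow> 'b \<Rightarrow> 'v) \<Rightarrow> 'b set \<Rightarrow> bool"
  where "sub_bimodule sV W actA actB Bset \<longleftrightarrow>
    (\<forall>x\<in>W. \<forall>y\<in>W. x + y \<in> W) \<and> (\<forall>c. \<forall>x\<in>W. sV c x \<in> W) \<and>
    (\<forall>a. \<forall>x\<in>W. actA a x \<in> W) \<and> (\<forall>b\<in>Bset. \<forall>x\<in>W. actB x b \<in> W)"

abbreviation corner_module :: "('v \<Rightarrow> 'b \<Rightarrow> 'v) \<Rightarrow> 'b \<Rightarrow> 'v set"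
  where "corner_module actB e \<equiv> {actB v e | v. True}"

abbreviation corner_algebra :: "'b::ring_1 \<Rightarrow> 'b set"
  where "corner_algebra e \<equiv> {e * b * e | b. True}"

lemma left_image_UNIV: "left_image UNIV actA Aset = actA ` Aset"
  by (simp add: left_image_def restrict_UNIV)

lemma right_image_UNIV: "right_image UNIV actB Bset = (\<lambda>b w. actB w b) ` Bset"
  by (simp add: right_image_def restrict_UNIV)

lemma right_endos_subset_left_image_iff_extends:
  assumes "left_image UNIV actA UNIV = right_endos sV UNIV actB UNIV"
  shows "right_endos sV W actB Bset \<subseteq> left_image W actA UNIV \<longleftrightarrow>
    (\<forall>\<psi> \<in> right_endos sV W actB Bset. \<exists>\<phi> \<in> right_endos sV UNIV actB UNIV. restrict \<phi> W = \<psi>)"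
proof -
  have "right_endos sV UNIV actB UNIV = range actA"
    using assms by (simp add: left_image_UNIV)
  then show ?thesis
    by (auto simp: left_image_def)
qed

context
  fixes sA :: "'k::field \<Rightarrow> 'a::ring_1 \<Rightarrow> 'a"
    and sB :: "'k \<Rightarrow> 'b::ring_1 \<Rightarrow> 'b"
    and sV :: "'k \<Rightarrow> 'v::ab_group_add \<Rightarrow> 'v"
    and actA :: "'a \<Rightarrow> 'v \<Rightarrow> 'v"
    and actB :: "'v \<Rightarrow> 'b \<Rightarrow> 'v"
  assumes bimodule: "kbimodule sA sB sV actA actB"
begin

lemma
  shows actA_add: "actA a (v + w) = actA a v + actA a w"
    and actA_scale: "actA a (sV c v) = sV c (actA a v)"
    and actB_mult: "actB v (b * b') = actB (actB v b) b'"
    and actB_add: "actB (v + w) b = actB v b + actB w b"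
    and actB_scale: "actB (sV c v) b = sV c (actB v b)"
    and actB_actA: "actB (actA a v) b = actA a (actB v b)"
  using bimodule by (simp_all add: kbimodule_def)

lemma sub_bimodule_corner:
  assumes "e * e = e"
  shows "sub_bimodule sV (corner_module actB e) actA actB (corner_algebra e)"
  unfolding sub_bimodule_def
proof (intro conjI ballI allI)
  fix x y assume "x \<in> corner_module actB e" "y \<in> corner_module actB e"
  then show "x + y \<in> corner_module actB e"
    by (auto simp: actB_add[symmetric])
next
  fix c x assume "x \<in> corner_module actB e"
  then show "sV c x \<in> corner_module actB e"
    by (auto simp: actB_scale[symmetric])
next
  fix a x assume "x \<in> corner_module actB e"
  then show "actA a x \<in> corner_module actB e"
    by (auto simp: actB_actA[symmetric])
next
  fix b x assume "b \<in> corner_algebra e" "x \<in> corner_module actB e"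
  then obtain c v where "b = e * c * e" "x = actB v e" by blast
  then have "actB x b = actB (actB v (e * c)) e"
    by (simp add: actB_mult[symmetric] mult.assoc[symmetric] assms)
  then show "actB x b \<in> corner_module actB e" by blast
qed

lemma actB_corner_idem:
  assumes "e * e = e" and "w \<in> corner_module actB e"
  shows "actB w e = w"
  using assms by (auto simp: actB_mult[symmetric])

lemma restrict_actA_in_right_endos:
  assumes "sub_bimodule sV W actA actB Bset"
  shows "restrict (actA a) W \<in> right_endos sV W actB Bset"
  using assms by (auto simp: sub_bimodule_def right_endos_def lin_endos_def
      actA_add actA_scale actB_actA)

lemma restrict_actB_in_left_endos:
  assumes "sub_bimodule sV W actA actB Bset" and "b \<in> Bset"
  shows "restrict (\<lambda>w. actB w b) W \<in> left_endos sV W actA UNIV"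
  using assms by (auto simp: sub_bimodule_def left_endos_def lin_endos_def
      actB_add actB_scale actB_actA)

lemma left_endos_corner_subset_right_image:
  assumes duality: "right_image UNIV actB UNIV = left_endos sV UNIV actA UNIV"
    and idem: "e * e = e"
  shows "left_endos sV (corner_module actB e) actA UNIV
    \<subseteq> right_image (corner_module actB e) actB (corner_algebra e)"
proof
  let ?W = "corner_module actB e"
  fix f assume f: "f \<in> left_endos sV ?W actA UNIV"
  have in_W: "actB v e \<in> ?W" for v by blast
  have "(\<lambda>v. f (actB v e)) \<in> left_endos sV UNIV actA UNIV"
    using f in_W by (simp add: left_endos_def lin_endos_def actB_add actB_scale actB_actA)
  then have "(\<lambda>v. f (actB v e)) \<in> (\<lambda>b w. actB w b) ` UNIV"
    using duality by (simp add: right_image_UNIV)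
  then obtain b where b: "\<And>v. f (actB v e) = actB v b"
    by (metis (no_types, lifting) imageE)
  have "f = restrict (\<lambda>w. actB w (e * b * e)) ?W"
  proof
    fix w show "f w = restrict (\<lambda>w. actB w (e * b * e)) ?W w"
    proof (cases "w \<in> ?W")
      case True
      have fw: "f w = actB w b"
        using b[of w] by (simp only: actB_corner_idem[OF idem True])
      have "f w \<in> ?W"
        using f True by (auto simp: left_endos_def lin_endos_def)
      then have "f w = actB (f w) e"
        by (rule actB_corner_idem[OF idem, symmetric])
      also have "\<dots> = actB w (e * b * e)"
        using actB_corner_idem[OF idem True] by (simp add: fw actB_mult)
      finally show ?thesis using True by simp
    next
      case False
      then show ?thesis using f by (simp add: left_endos_def lin_endos_def extensional_def)
    qed
  qed
  then show "f \<in> right_image ?W actB (corner_algebra e)"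
    unfolding right_image_def by blast
qed

lemma schur_weyl_iff_right_endos_subset_left_image:
  assumes "sub_bimodule sV W actA actB Bset"
    and "left_endos sV W actA UNIV \<subseteq> right_image W actB Bset"
  shows "schur_weyl sV W actA UNIV actB Bset \<longleftrightarrow>
    right_endos sV W actB Bset \<subseteq> left_image W actA UNIV"
proof -
  have "left_image W actA UNIV \<subseteq> right_endos sV W actB Bset"
    using restrict_actA_in_right_endos[OF assms(1)] by (auto simp: left_image_def)
  moreover have "right_image W actB Bset \<subseteq> left_endos sV W actA UNIV"
    using restrict_actB_in_left_endos[OF assms(1)] by (auto simp: right_image_def)
  ultimately show ?thesis
    using assms(2) by (auto simp: schur_weyl_def)
qed

end

theorem lemma2:
  fixes sA :: "'k::field \<Rightarrow> 'a::ring_1 \<Rightarrow> 'a"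
    and sB :: "'k \<Rightarrow> 'b::ring_1 \<Rightarrow> 'b"
    and sV :: "'k \<Rightarrow> 'v::ab_group_add \<Rightarrow> 'v"
    and actA :: "'a \<Rightarrow> 'v \<Rightarrow> 'v"
    and actB :: "'v \<Rightarrow> 'b \<Rightarrow> 'v"
    and e :: 'b
  assumes "kbimodule sA sB sV actA actB"
    and "schur_weyl sV UNIV actA UNIV actB UNIV"
    and "e * e = e"
    and "{actB v e | v. True} \<noteq> {0}"
  shows "schur_weyl sV {actB v e | v. True} actA UNIV actB {e * b * e | b. True}
     \<longleftrightarrow> (\<forall>\<psi> \<in> right_endos sV {actB v e | v. True} actB {e * b * e | b. True}.
            \<exists>\<phi> \<in> right_endos sV UNIV actB UNIV. restrict \<phi> {actB v e | v. True} = \<psi>)"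
proof -
  have duality_A: "left_image UNIV actA UNIV = right_endos sV UNIV actB UNIV"
    and duality_B: "right_image UNIV actB UNIV = left_endos sV UNIV actA UNIV"
    using assms(2) by (simp_all add: schur_weyl_def)
  have "schur_weyl sV (corner_module actB e) actA UNIV actB (corner_algebra e) \<longleftrightarrow>
      right_endos sV (corner_module actB e) actB (corner_algebra e)
        \<subseteq> left_image (corner_module actB e) actA UNIV"
    using schur_weyl_iff_right_endos_subset_left_image[OF assms(1)
        sub_bimodule_corner[OF assms(1,3)]
        left_endos_corner_subset_right_image[OF assms(1) duality_B assms(3)]] .
  also have "\<dots> \<longleftrightarrow> (\<forall>\<psi> \<in> right_endos sV (corner_module actB e) actB (corner_algebra e).
      \<exists>\<phi> \<in> right_endos sV UNIV actB UNIV. restrict \<phi> (corner_module actB e) = \<psi>)"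
    by (rule right_endos_subset_left_image_iff_extends[OF duality_A])
  finally show ?thesis .
qed

end
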